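(* Let $\alpha>0$ and consider the nonlinear program described in the context. Let $x^*\in X_{KKT}$ with associated Lagrange multipliers $(u^*,v^* )$, and suppose LICQ holds at $x^*$ and $(x^*,u^*,v^* )$ satisfies the strict complementarity condition and the second-order sufficient condition. Then $\mathcal{G}_\alpha$ is differentiable at $x^*$ and $\frac{\partial\mathcal{G}_\alpha}{\partial x}(x^* )=-PQ-\alpha(I-P)$, where $I$ is the $n\times n$ identity, $P$ is the orthogonal projection matrix onto $\ker\frac{\partial g_{I_0}}{\partial x}(x^* )\cap\ker\frac{\partial h}{\partial x}(x^* )$, and $Q=\nabla^2f(x^* )+\sum_{i=1}^m u_i^*\nabla^2g_i(x^* )+\sum_{j=1}^k v_j^*\nabla^2h_j(x^* )$.
   Context: Let $f:\mathbb{R}^n\to\mathbb{R}$, $g:\mathbb{R}^n\to\mathbb{R}^m$, $h:\mathbb{R}^n\to\mathbb{R}^k$ be twice continuously differentiable; program: minimize $f(x)$ subject to $g(x)\le0$, $h(x)=0$. $I_0(x)=\{i:g_i(x)=0\}$ and $\frac{\partial g_{I_0}}{\partial x}(x)$ is the matrix with rows $\nabla g_i(x)^\top$, $i\in I_0(x)$. LICQ at $x$: $\{\nabla g_i(x)\}_{i\in I_0(x)}\cup\{\nabla h_j(x)\}_{j=1}^k$ linearly independent. $(x^*,u^*,v^* )$ is a KKT triple if $\nabla f(x^* )+\frac{\partial g}{\partial x}(x^* )^\top u^*+\frac{\partial h}{\partial x}(x^* )^\top v^*=0$, $g(x^* )\le0$, $h(x^* )=0$, $u^*\ge0$, $(u^*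 )^\top g(x^* )=0$; $X_{KKT}$ is the set of such $x^*$. Strict complementarity: $u_i^*>0$ for all $i\in I_0(x^* )$. Second-order sufficient condition: $z^\top Qz>0$ for all nonzero $z\in\ker\frac{\partial g_{I_0}}{\partial x}(x^* )\cap\ker\frac{\partial h}{\partial x}(x^* )$, with $Q$ as in the claim. $\mathcal{G}_\alpha(x)$ is the unique minimizer over $\xi$ of $\frac12\|\xi+\nabla f(x)\|^2$ subject to $\frac{\partial g}{\partial x}(x)\xi\le-\alpha g(x)$, $\frac{\partial h}{\partial x}(x)\xi=-\alpha h(x)$. *)

theory Defs
  imports "HOL-Analysis.Analysis"
begin

text \<open>Vectors in R^n are rendered as real^'n. Constraint functions are indexed by
  natural numbers: g i for i < m, h j for j < k (so m = 0 or k = 0 is allowed).\<close>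

definition grad :: "(real^'n \<Rightarrow> real) \<Rightarrow> real^'n \<Rightarrow> real^'n" where
  "grad F x = (THE v. (F has_derivative (\<lambda>d. v \<bullet> d)) (at x))"

definition hess :: "(real^'n \<Rightarrow> real) \<Rightarrow> real^'n \<Rightarrow> real^'n^'n" where
  "hess F x = (THE M. (grad F has_derivative (\<lambda>d. M *v d)) (at x))"

definition twice_cont_diff :: "(real^'n \<Rightarrow> real) \<Rightarrow> bool" where
  "twice_cont_diff F \<longleftrightarrow>
     (\<exists>Df D2f. (\<forall>x. (F has_derivative (\<lambda>d. Df x \<bullet> d)) (at x)) \<and>
               (\<forall>x. (Df has_derivative (\<lambda>d. D2f x *v d)) (at x)) \<and>
               continuous_on UNIV D2f)"

definition active :: "(nat \<Rightarrow> real^'n \<Rightarrow> real) \<Rightarrow> nat \<Rightarrow> real^'n \<Rightarrow> nat set" where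
  "active g m x = {i. i < m \<and> g i x = 0}"

definition LICQ :: "(nat \<Rightarrow> real^'n \<Rightarrow> real) \<Rightarrow> nat \<Rightarrow> (nat \<Rightarrow> real^'n \<Rightarrow> real) \<Rightarrow> nat
                    \<Rightarrow> real^'n \<Rightarrow> bool" where
  "LICQ g m h k x \<longleftrightarrow>
     (\<forall>a b. (\<Sum>i\<in>active g m x. a i *\<^sub>R grad (g i) x) + (\<Sum>j<k. b j *\<^sub>R grad (h j) x) = 0
        \<longrightarrow> (\<forall>i\<in>active g m x. a i = 0) \<and> (\<forall>j<k. b j = 0))"

definition KKT_triple :: "(real^'n \<Rightarrow> real) \<Rightarrow> (nat \<Rightarrow> real^'n \<Rightarrow> real) \<Rightarrow> nat
     \<Rightarrow> (nat \<Rightarrow> real^'n \<Rightarrow> real) \<Rightarrow> nat \<Rightarrow> real^'n \<Rightarrow> (nat \<Rightarrow> real) \<Rightarrow> (nat \<Rightarrow> real) \<Rightarrow> bool" where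
  "KKT_triple f g m h k x u v \<longleftrightarrow>
     grad f x + (\<Sum>i<m. u i *\<^sub>R grad (g i) x) + (\<Sum>j<k. v j *\<^sub>R grad (h j) x) = 0 \<and>
     (\<forall>i<m. g i x \<le> 0) \<and> (\<forall>j<k. h j x = 0) \<and> (\<forall>i<m. u i \<ge> 0) \<and>
     (\<Sum>i<m. u i * g i x) = 0"

definition crit_space :: "(nat \<Rightarrow> real^'n \<Rightarrow> real) \<Rightarrow> nat \<Rightarrow> (nat \<Rightarrow> real^'n \<Rightarrow> real) \<Rightarrow> nat
     \<Rightarrow> real^'n \<Rightarrow> (real^'n) set" where
  "crit_space g m h k x =
     {z. (\<forall>i\<in>active g m x. grad (g i) x \<bullet> z = 0) \<and> (\<forall>j<k. grad (h j) x \<bullet> z = 0)}"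

definition is_orth_proj_matrix :: "real^'n^'n \<Rightarrow> (real^'n) set \<Rightarrow> bool" where
  "is_orth_proj_matrix P K \<longleftrightarrow>
     (\<forall>x. P *v x \<in> K \<and> (\<forall>y\<in>K. (x - P *v x) \<bullet> y = 0))"

definition dir_feasible :: "real \<Rightarrow> (nat \<Rightarrow> real^'n \<Rightarrow> real) \<Rightarrow> nat
     \<Rightarrow> (nat \<Rightarrow> real^'n \<Rightarrow> real) \<Rightarrow> nat \<Rightarrow> real^'n \<Rightarrow> (real^'n) set" where
  "dir_feasible \<alpha> g m h k x =
     {\<xi>. (\<forall>i<m. grad (g i) x \<bullet> \<xi> \<le> - \<alpha> * g i x) \<and> (\<forall>j<k. grad (h j) x \<bullet> \<xi> = - \<alpha> * h j x)}"

definition G_alpha :: "real \<Rightarrow> (real^'n \<Rightarrow> real) \<Rightarrow> (nat \<Rightarrow> real^'n \<Rightarrow> real) \<Rightarrow> nat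
     \<Rightarrow> (nat \<Rightarrow> real^'n \<Rightarrow> real) \<Rightarrow> nat \<Rightarrow> real^'n \<Rightarrow> real^'n" where
  "G_alpha \<alpha> f g m h k x =
     (THE \<xi>. \<xi> \<in> dir_feasible \<alpha> g m h k x \<and>
        (\<forall>\<eta>\<in>dir_feasible \<alpha> g m h k x.
           (1/2) * (norm (\<xi> + grad f x))\<^sup>2 \<le> (1/2) * (norm (\<eta> + grad f x))\<^sup>2))"

end

theory Submission
  imports Defs
begin

text \<open>
  Near x* the active set does not change and the active multipliers stay positive, so
  G_alpha(x) is the solution of the projection problem in which the active inequalities and the
  equalities are all imposed as equalities: G_alpha(x) = - grad f(x) - sum_l w_l(x) grad c_l(x),
  where the multipliers w(x) solve a linear system that is nonsingular at x* by LICQ and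
  therefore depend continuously on x. Continuity of w is all the differentiation needs: P
  annihilates the gradients grad c_l(x*), so P G_alpha has derivative -PQ at x*, while the
  linearised constraints grad c_l(x*) . G_alpha(x) = - alpha c_l(x) + o(|x - x*|) give the
  normal component (I - P) G_alpha the derivative - alpha (I - P).
\<close>

lemma (in bounded_bilinear) has_derivative_vanishing_right:
  assumes u: "(u \<longlongrightarrow> u0) (at x0)"
    and v: "(v has_derivative v') (at x0)" and v0: "v x0 = 0"
  shows "((\<lambda>x. prod (u x) (v x)) has_derivative (\<lambda>d. prod u0 (v' d))) (at x0)"
proof -
  obtain K where K: "K > 0" "\<And>a b. norm (prod a b) \<le> norm a * norm b * K"
    using pos_bounded by blast
  have lin: "bounded_linear v'"
    and N: "((\<lambda>y. norm (v y - v x0 - v' (y - x0)) / norm (y - x0)) \<longlongrightarrow> 0) (at x0)"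
    using v by (auto simp: has_derivative_iff_norm)
  obtain B where B: "B > 0" "\<And>d. norm (v' d) \<le> norm d * B"
    using bounded_linear.pos_bounded[OF lin] by blast
  let ?N = "\<lambda>y. norm (v y - v x0 - v' (y - x0)) / norm (y - x0)"
  have bound: "norm (prod (u y - u0) (v y)) / norm (y - x0) \<le> K * norm (u y - u0) * (?N y + B)" for y
  proof (cases "y = x0")
    case False
    have "norm (v y) \<le> norm (v y - v x0 - v' (y - x0)) + norm (y - x0) * B"
      using norm_triangle_ineq[of "v y - v x0 - v' (y - x0)" "v' (y - x0)"] B(2)[of "y - x0"] v0
      by simp
    also have "\<dots> = (?N y + B) * norm (y - x0)"
      using False by (simp add: field_simps)
    finally have vy: "norm (v y) \<le> (?N y + B) * norm (y - x0)" .
    have "norm (prod (u y - u0) (v y)) \<le> norm (u y - u0) * norm (v y) * K"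
      by (rule K(2))
    also have "\<dots> \<le> norm (u y - u0) * ((?N y + B) * norm (y - x0)) * K"
      using K(1) vy by (intro mult_right_mono mult_left_mono) auto
    finally have "norm (prod (u y - u0) (v y)) \<le> norm (u y - u0) * ((?N y + B) * norm (y - x0)) * K" .
    then show ?thesis
      using False by (simp add: divide_le_eq mult_ac)
  qed (use K B v0 in \<open>simp add: zero_le_mult_iff\<close>)
  have "((\<lambda>y. K * norm (u y - u0) * (?N y + B)) \<longlongrightarrow> K * 0 * (0 + B)) (at x0)"
    using u N by (intro tendsto_intros) (simp add: tendsto_norm_zero_iff LIM_zero_iff)
  then have "((\<lambda>y. K * norm (u y - u0) * (?N y + B)) \<longlongrightarrow> 0) (at x0)"
    by simp
  then have "((\<lambda>y. norm (prod (u y - u0) (v y)) / norm (y - x0)) \<longlongrightarrow> 0) (at x0)"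
    by (rule Lim_null_comparison[OF always_eventually, rotated]) (use bound in simp)
  then have small: "((\<lambda>y. prod (u y - u0) (v y)) has_derivative (\<lambda>_. 0)) (at x0)"
    unfolding has_derivative_iff_norm using v0 by (simp add: zero_right)
  have "((\<lambda>x. prod u0 (v x) + prod (u x - u0) (v x)) has_derivative (\<lambda>d. prod u0 (v' d) + 0)) (at x0)"
    by (intro has_derivative_add small bounded_linear.has_derivative[OF bounded_linear_right v])
  then show ?thesis by (simp add: diff_left)
qed

lemma has_derivative_transform_nhds:
  assumes "(f has_derivative f') (at x)" "\<forall>\<^sub>F y in nhds x. f y = g y"
  shows "(g has_derivative f') (at x)"
  using assms by (auto simp: eventually_nhds_conv_at intro: has_derivative_transform_eventually)

lemma norm_linear_le_sum_Basis:
  fixes L :: "'a::euclidean_space \<Rightarrow> 'b::real_normed_vector"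
  assumes "linear L"
  shows "norm (L z) \<le> (\<Sum>b\<in>Basis. norm (L b)) * norm z"
proof -
  have "L z = L (\<Sum>b\<in>Basis. (z \<bullet> b) *\<^sub>R b)"
    by (simp add: euclidean_representation)
  also have "\<dots> = (\<Sum>b\<in>Basis. (z \<bullet> b) *\<^sub>R L b)"
    using assms by (simp add: linear_sum linear_scale)
  finally have "norm (L z) \<le> (\<Sum>b\<in>Basis. norm ((z \<bullet> b) *\<^sub>R L b))"
    by (metis norm_sum)
  also have "\<dots> \<le> (\<Sum>b\<in>Basis. norm z * norm (L b))"
    by (intro sum_mono) (simp add: Basis_le_norm mult_right_mono)
  finally show ?thesis
    by (simp add: sum_distrib_left mult.commute)
qed

lemma eventually_bounded_below_perturbation:
  fixes L :: "'x \<Rightarrow> 'a::euclidean_space \<Rightarrow> 'b::euclidean_space"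
  assumes "linear L0" "inj L0" "\<And>x. linear (L x)" "\<And>z. ((\<lambda>x. L x z) \<longlongrightarrow> L0 z) F"
  obtains c where "c > 0" "\<forall>\<^sub>F x in F. \<forall>z. c * norm z \<le> norm (L x z)"
proof -
  obtain c where c: "c > 0" "\<And>z. c * norm z \<le> norm (L0 z)"
    using linear_inj_bounded_below_pos[OF assms(1,2)] by blast
  define e where "e x = (\<Sum>b\<in>Basis. norm (L x b - L0 b))" for x
  have "(e \<longlongrightarrow> (\<Sum>b\<in>(Basis::'a set). norm (L0 b - L0 b))) F"
    unfolding e_def by (intro tendsto_intros assms(4))
  then have "\<forall>\<^sub>F x in F. e x < c / 2"
    using c(1) by (intro order_tendstoD) auto
  then have "\<forall>\<^sub>F x in F. \<forall>z. c / 2 * norm z \<le> norm (L x z)"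
  proof (rule eventually_mono, intro allI)
    fix x z
    assume small: "e x < c / 2"
    have "norm (L x z - L0 z) \<le> e x * norm z"
      unfolding e_def by (intro norm_linear_le_sum_Basis linear_compose_sub assms(1,3))
    also have "\<dots> \<le> c / 2 * norm z"
      using small by (intro mult_right_mono) auto
    finally have "norm (L x z - L0 z) \<le> c / 2 * norm z" .
    then show "c / 2 * norm z \<le> norm (L x z)"
      using c(2)[of z] norm_triangle_ineq2[of "L0 z" "L x z"] by (simp add: norm_minus_commute)
  qed
  then show thesis
    using c(1) by (intro that[of "c / 2"]) auto
qed

lemma eventually_surj_perturbation:
  fixes L :: "'x \<Rightarrow> 'a::euclidean_space \<Rightarrow> 'a"
  assumes "linear L0" "inj L0" "\<And>x. linear (L x)" "\<And>z. ((\<lambda>x. L x z) \<longlongrightarrow> L0 z) F"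
  shows "\<forall>\<^sub>F x in F. surj (L x)"
proof -
  obtain c where c: "c > 0" "\<forall>\<^sub>F x in F. \<forall>z. c * norm z \<le> norm (L x z)"
    using eventually_bounded_below_perturbation[OF assms] by blast
  show ?thesis
  proof (rule eventually_mono[OF c(2)])
    fix x
    assume below: "\<forall>z. c * norm z \<le> norm (L x z)"
    have "z = 0" if "L x z = 0" for z
      using below[rule_format, of z] that c(1) by (simp add: mult_le_0_iff)
    then have "inj (L x)"
      using assms(3) by (auto simp: linear_inj_iff_eq_0)
    then show "surj (L x)"
      using assms(3) by (simp add: linear_injective_imp_surjective)
  qed
qed

lemma tendsto_linear_solution:
  fixes L :: "'x \<Rightarrow> 'a::euclidean_space \<Rightarrow> 'b::euclidean_space"
  assumes "linear L0" "inj L0" "\<And>x. linear (L x)" "\<And>z. ((\<lambda>x. L x z) \<longlongrightarrow> L0 z) F"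
    and solves: "\<forall>\<^sub>F x in F. L x (z x) = r x" and "L0 z0 = r0" and "(r \<longlongrightarrow> r0) F"
  shows "(z \<longlongrightarrow> z0) F"
proof -
  obtain c where c: "c > 0" "\<forall>\<^sub>F x in F. \<forall>y. c * norm y \<le> norm (L x y)"
    using eventually_bounded_below_perturbation[OF assms(1-4)] by blast
  have "((\<lambda>x. norm (r x - L x z0) / c) \<longlongrightarrow> norm (r0 - L0 z0) / c) F"
    using c(1) by (intro tendsto_intros assms) auto
  then have lim: "((\<lambda>x. norm (r x - L x z0) / c) \<longlongrightarrow> 0) F"
    using assms(6) by simp
  have "\<forall>\<^sub>F x in F. norm (z x - z0) \<le> norm (r x - L x z0) / c"
    using c(2) solves
  proof eventually_elim
    case (elim x)
    have "c * norm (z x - z0) \<le> norm (L x (z x - z0))"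
      using elim(1) by blast
    also have "\<dots> = norm (r x - L x z0)"
      using elim(2) assms(3) by (simp add: linear_diff)
    finally show ?case
      using c(1) by (simp add: pos_le_divide_eq mult.commute)
  qed
  then have "((\<lambda>x. z x - z0) \<longlongrightarrow> 0) F"
    by (rule Lim_null_comparison[OF _ lim])
  then show ?thesis
    by (simp add: LIM_zero_iff)
qed

lemma matrix_vector_mult_sum_left:
  fixes M :: "'i \<Rightarrow> real^'n^'m"
  shows "(\<Sum>i\<in>S. M i) *v d = (\<Sum>i\<in>S. M i *v d)"
  by (induction S rule: infinite_finite_induct) (auto simp: matrix_vector_mult_add_rdistrib)

lemma matrix_vector_mult_uminus_left:
  fixes M :: "real^'n^'m"
  shows "(- M) *v d = - (M *v d)"
  by (simp add: matrix_vector_mult_def sum_negf vec_eq_iff)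

lemma is_orth_proj_matrixD:
  assumes "is_orth_proj_matrix P K"
  shows "P *v z \<in> K" and "y \<in> K \<Longrightarrow> (z - P *v z) \<bullet> y = 0"
  using assms unfolding is_orth_proj_matrix_def by auto

lemma is_orth_proj_matrix_fixes:
  assumes "is_orth_proj_matrix P K" "subspace K" "z \<in> K"
  shows "P *v z = z"
proof -
  have "z - P *v z \<in> K"
    using assms by (intro subspace_diff is_orth_proj_matrixD(1))
  then have "(z - P *v z) \<bullet> (z - P *v z) = 0"
    by (rule is_orth_proj_matrixD(2)[OF assms(1)])
  then show ?thesis
    by simp
qed

lemma is_orth_proj_matrix_idem:
  assumes "is_orth_proj_matrix P K" "subspace K"
  shows "P *v (P *v z) = P *v z"
  using assms by (intro is_orth_proj_matrix_fixes is_orth_proj_matrixD(1))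

lemma is_orth_proj_matrix_orthogonal:
  assumes "is_orth_proj_matrix P K" "\<And>y. y \<in> K \<Longrightarrow> v \<bullet> y = 0"
  shows "P *v v = 0"
proof -
  have "(v - P *v v) \<bullet> (P *v v) = 0" and "v \<bullet> (P *v v) = 0"
    using assms is_orth_proj_matrixD[OF assms(1)] by auto
  then have "(P *v v) \<bullet> (P *v v) = 0"
    by (simp add: inner_diff_left)
  then show ?thesis
    by simp
qed

lemma twice_cont_diff_has_derivative:
  fixes F :: "real^'n \<Rightarrow> real"
  assumes "twice_cont_diff F"
  shows "(F has_derivative (\<lambda>d. grad F x \<bullet> d)) (at x)"
    and "(grad F has_derivative (\<lambda>d. hess F x *v d)) (at x)"
proof -
  obtain Df D2f where D1: "\<And>x. (F has_derivative (\<lambda>d. Df x \<bullet> d)) (at x)"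
    and D2: "\<And>x. (Df has_derivative (\<lambda>d. D2f x *v d)) (at x)"
    using assms unfolding twice_cont_diff_def by blast
  have "grad F y = Df y" for y
    unfolding grad_def
  proof (rule the_equality)
    fix v
    assume "(F has_derivative (\<lambda>d. v \<bullet> d)) (at y)"
    then have "(\<lambda>d. v \<bullet> d) = (\<lambda>d. Df y \<bullet> d)"
      using D1 by (rule has_derivative_unique)
    then have "(v - Df y) \<bullet> (v - Df y) = 0"
      by (metis inner_diff_left right_minus_eq)
    then show "v = Df y"
      by simp
  qed (rule D1)
  then have grad: "grad F = Df"
    by blast
  have "hess F y = D2f y" for y
    unfolding hess_def grad
  proof (rule the_equality)
    fix M
    assume "(Df has_derivative (\<lambda>d. M *v d)) (at y)"
    then have "(\<lambda>d. M *v d) = (\<lambda>d. D2f y *v d)"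
      using D2 by (rule has_derivative_unique)
    then show "M = D2f y"
      by (simp add: matrix_eq fun_eq_iff)
  qed (rule D2)
  then show "(F has_derivative (\<lambda>d. grad F x \<bullet> d)) (at x)"
    and "(grad F has_derivative (\<lambda>d. hess F x *v d)) (at x)"
    using D1 D2 grad by simp_all
qed

lemma KKT_triple_inactive_multiplier:
  assumes "KKT_triple f g m h k x u v" "i < m" "i \<notin> active g m x"
  shows "u i = 0"
proof -
  have "\<forall>j\<in>{..<m}. - (u j * g j x) \<ge> 0" and "(\<Sum>j<m. - (u j * g j x)) = 0"
    using assms(1) by (auto simp: KKT_triple_def mult_nonneg_nonpos sum_negf)
  then have "\<forall>j\<in>{..<m}. u j * g j x = 0"
    using sum_nonneg_eq_0_iff[OF finite_lessThan, of m "\<lambda>j. - (u j * g j x)"] by simp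
  moreover have "g i x \<noteq> 0"
    using assms(2,3) by (simp add: active_def)
  ultimately show ?thesis
    using assms(2) by auto
qed

lemma dir_feasible_variational_ineq:
  assumes feasible: "\<xi> \<in> dir_feasible \<alpha> g m h k x" "\<eta> \<in> dir_feasible \<alpha> g m h k x"
    and stationary: "\<xi> + q + (\<Sum>i\<in>I. \<mu> i *\<^sub>R grad (g i) x) + (\<Sum>j<k. \<nu> j *\<^sub>R grad (h j) x) = 0"
    and I: "I \<subseteq> {..<m}"
    and nonneg: "\<And>i. i \<in> I \<Longrightarrow> \<mu> i \<ge> 0"
    and tight: "\<And>i. i \<in> I \<Longrightarrow> grad (g i) x \<bullet> \<xi> = - \<alpha> * g i x"
  shows "(\<xi> + q) \<bullet> (\<eta> - \<xi>) \<ge> 0"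
proof -
  have "grad (g i) x \<bullet> (\<eta> - \<xi>) \<le> 0" if "i \<in> I" for i
    using tight[OF that] feasible(2) I that by (auto simp: dir_feasible_def inner_diff_right)
  then have "(\<Sum>i\<in>I. \<mu> i * (grad (g i) x \<bullet> (\<eta> - \<xi>))) \<le> 0"
    using nonneg by (intro sum_nonpos) (simp add: mult_nonneg_nonpos)
  moreover have "grad (h j) x \<bullet> (\<eta> - \<xi>) = 0" if "j < k" for j
    using feasible that by (auto simp: dir_feasible_def inner_diff_right)
  moreover have "\<xi> + q = - (\<Sum>i\<in>I. \<mu> i *\<^sub>R grad (g i) x) - (\<Sum>j<k. \<nu> j *\<^sub>R grad (h j) x)"
    using stationary by (simp add: algebra_simps eq_neg_iff_add_eq_0)
  ultimately show ?thesis
    by (simp add: inner_diff_left inner_sum_left)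
qed

lemma G_alpha_eqI:
  assumes feasible: "\<xi> \<in> dir_feasible \<alpha> g m h k x"
    and stationary: "\<xi> + grad f x + (\<Sum>i\<in>I. \<mu> i *\<^sub>R grad (g i) x) + (\<Sum>j<k. \<nu> j *\<^sub>R grad (h j) x) = 0"
    and "I \<subseteq> {..<m}" "\<And>i. i \<in> I \<Longrightarrow> \<mu> i \<ge> 0"
    and "\<And>i. i \<in> I \<Longrightarrow> grad (g i) x \<bullet> \<xi> = - \<alpha> * g i x"
  shows "G_alpha \<alpha> f g m h k x = \<xi>"
proof -
  let ?F = "dir_feasible \<alpha> g m h k x" and ?q = "grad f x"
  have gap: "(norm (\<xi> + ?q))\<^sup>2 + (norm (\<eta> - \<xi>))\<^sup>2 \<le> (norm (\<eta> + ?q))\<^sup>2" if "\<eta> \<in> ?F" for \<eta>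
  proof -
    have "\<eta> + ?q = (\<xi> + ?q) + (\<eta> - \<xi>)"
      by simp
    then have "(norm (\<eta> + ?q))\<^sup>2 = (norm ((\<xi> + ?q) + (\<eta> - \<xi>)))\<^sup>2"
      by (simp only:)
    also have "\<dots> = (norm (\<xi> + ?q))\<^sup>2 + 2 * ((\<xi> + ?q) \<bullet> (\<eta> - \<xi>)) + (norm (\<eta> - \<xi>))\<^sup>2"
      using dot_norm[of "\<xi> + ?q" "\<eta> - \<xi>"] by (simp add: field_simps)
    finally show ?thesis
      using dir_feasible_variational_ineq[OF feasible that stationary assms(3-5)] by simp
  qed
  show ?thesis
    unfolding G_alpha_def
  proof (rule the_equality)
    have "(norm (\<xi> + ?q))\<^sup>2 \<le> (norm (\<eta> + ?q))\<^sup>2" if "\<eta> \<in> ?F" for \<eta>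
      using gap[OF that] zero_le_power2[of "norm (\<eta> - \<xi>)"] by linarith
    then show "\<xi> \<in> ?F \<and> (\<forall>\<eta>\<in>?F. 1/2 * (norm (\<xi> + ?q))\<^sup>2 \<le> 1/2 * (norm (\<eta> + ?q))\<^sup>2)"
      using feasible by simp
  next
    fix \<zeta>
    assume "\<zeta> \<in> ?F \<and> (\<forall>\<eta>\<in>?F. 1/2 * (norm (\<zeta> + ?q))\<^sup>2 \<le> 1/2 * (norm (\<eta> + ?q))\<^sup>2)"
    then have "(norm (\<zeta> + ?q))\<^sup>2 \<le> (norm (\<xi> + ?q))\<^sup>2" and "\<zeta> \<in> ?F"
      using feasible by auto
    then have "(norm (\<zeta> - \<xi>))\<^sup>2 \<le> 0"
      using gap[of \<zeta>] by linarith
    then show "\<zeta> = \<xi>"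
      by simp
  qed
qed

locale equality_direction =
  fixes J :: "'j set"
    and c :: "'j \<Rightarrow> real^'n \<Rightarrow> real"
    and a :: "'j \<Rightarrow> real^'n \<Rightarrow> real^'n"
    and H :: "'j \<Rightarrow> real^'n^'n"
    and df :: "real^'n \<Rightarrow> real^'n"
    and Hf :: "real^'n^'n"
    and x0 :: "real^'n"
    and w0 :: "'j \<Rightarrow> real"
    and P :: "real^'n^'n"
    and \<alpha> :: real
  assumes finite_J: "finite J"
    and c_has_derivative: "\<And>l. l \<in> J \<Longrightarrow> (c l has_derivative (\<lambda>d. a l x0 \<bullet> d)) (at x0)"
    and c_x0: "\<And>l. l \<in> J \<Longrightarrow> c l x0 = 0"
    and a_has_derivative: "\<And>l. l \<in> J \<Longrightarrow> (a l has_derivative (\<lambda>d. H l *v d)) (at x0)"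
    and df_has_derivative: "(df has_derivative (\<lambda>d. Hf *v d)) (at x0)"
    and a_independent: "\<And>t l. (\<Sum>l\<in>J. t l *\<^sub>R a l x0) = 0 \<Longrightarrow> l \<in> J \<Longrightarrow> t l = 0"
    and stationary: "df x0 + (\<Sum>l\<in>J. w0 l *\<^sub>R a l x0) = 0"
    and P_proj: "is_orth_proj_matrix P {z. \<forall>l\<in>J. a l x0 \<bullet> z = 0}"
begin

lemma isCont_c: "l \<in> J \<Longrightarrow> isCont (c l) x0"
  and isCont_a: "l \<in> J \<Longrightarrow> isCont (a l) x0"
  and isCont_df: "isCont df x0"
  using c_has_derivative a_has_derivative df_has_derivative by (auto dest: has_derivative_continuous)

lemma subspace_tangent: "subspace {z. \<forall>l\<in>J. a l x0 \<bullet> z = 0}"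
  by (auto simp: subspace_def inner_add_right)

lemma P_fixes: "(\<And>l. l \<in> J \<Longrightarrow> a l x0 \<bullet> z = 0) \<Longrightarrow> P *v z = z"
  using is_orth_proj_matrix_fixes[OF P_proj subspace_tangent] by auto

lemma inner_a_P_eq_0: "l \<in> J \<Longrightarrow> a l x0 \<bullet> (P *v z) = 0"
  using is_orth_proj_matrixD(1)[OF P_proj] by auto

lemma P_idem: "P *v (P *v z) = P *v z"
  by (rule is_orth_proj_matrix_idem[OF P_proj subspace_tangent])

lemma P_a_eq_0: "l \<in> J \<Longrightarrow> P *v a l x0 = 0"
  by (rule is_orth_proj_matrix_orthogonal[OF P_proj]) auto

lemma sum_a_add_P_eq_0D:
  assumes "(\<Sum>l\<in>J. s l *\<^sub>R a l x0) + P *v z = 0"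
  shows "P *v z = 0" and "l \<in> J \<Longrightarrow> s l = 0"
proof -
  let ?E = "\<Sum>l\<in>J. s l *\<^sub>R a l x0"
  have "?E \<bullet> (P *v z) = 0"
    by (simp add: inner_sum_left inner_a_P_eq_0)
  moreover have "P *v z = - ?E"
    using assms by (simp add: eq_neg_iff_add_eq_0 add.commute)
  ultimately have "(P *v z) \<bullet> (P *v z) = 0"
    by simp
  then show Pz: "P *v z = 0"
    by simp
  show "l \<in> J \<Longrightarrow> s l = 0"
    using assms a_independent by (simp add: Pz)
qed

text \<open>
  The direction at x treats every constraint in J as an equality; its multipliers solve the Gram
  system \<open>\<Sum>\<^sub>l' (a l x \<bullet> a l' x) w l' = \<alpha> c l x - a l x \<bullet> df x\<close>. To work in \<open>real^'n\<close>, a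
  multiplier family w is encoded by a vector z with \<open>w l = a l x0 \<bullet> z\<close> (onto by independence);
  the summand \<open>P *v z\<close> makes the encoding unique, turning the system into an endomorphism
  \<open>gram_system x\<close> that is injective at x0, hence invertible near x0.
\<close>

definition gradient_comb :: "real^'n \<Rightarrow> real^'n \<Rightarrow> real^'n" where
  "gradient_comb x z = (\<Sum>l\<in>J. (a l x0 \<bullet> z) *\<^sub>R a l x)"

definition gram_system :: "real^'n \<Rightarrow> real^'n \<Rightarrow> real^'n" where
  "gram_system x z = (\<Sum>l\<in>J. (a l x \<bullet> gradient_comb x z) *\<^sub>R a l x0) + P *v z"

definition gram_rhs :: "real^'n \<Rightarrow> real^'n" where
  "gram_rhs x = (\<Sum>l\<in>J. (\<alpha> * c l x - a l x \<bullet> df x) *\<^sub>R a l x0)"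

definition multiplier_code :: "real^'n \<Rightarrow> real^'n" where
  "multiplier_code x = (SOME z. gram_system x z = gram_rhs x)"

definition multiplier :: "'j \<Rightarrow> real^'n \<Rightarrow> real" where
  "multiplier l x = a l x0 \<bullet> multiplier_code x"

definition direction :: "real^'n \<Rightarrow> real^'n" where
  "direction x = - df x - (\<Sum>l\<in>J. multiplier l x *\<^sub>R a l x)"

lemma direction_eq: "direction x = - df x - gradient_comb x (multiplier_code x)"
  by (simp add: direction_def gradient_comb_def multiplier_def)

lemma linear_gradient_comb: "linear (gradient_comb x)"
  by (rule linearI)
    (simp_all add: gradient_comb_def inner_add_right scaleR_add_left sum.distrib scaleR_sum_right)

lemma linear_gram_system: "linear (gram_system x)"
proof (rule linearI)
  fix z1 z2
  show "gram_system x (z1 + z2) = gram_system x z1 + gram_system x z2"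
    using linear_add[OF linear_gradient_comb]
    by (simp add: gram_system_def inner_add_right scaleR_add_left sum.distrib
        matrix_vector_right_distrib algebra_simps)
next
  fix s z
  show "gram_system x (s *\<^sub>R z) = s *\<^sub>R gram_system x z"
    using linear_scale[OF linear_gradient_comb]
    by (simp add: gram_system_def scaleR_sum_right matrix_scaleR_vector_ac scaleR_add_right
        flip: scaleR_matrix_vector_assoc)
qed

lemma inj_gram_system_x0: "inj (gram_system x0)"
proof -
  have "z = 0" if z: "gram_system x0 z = 0" for z
  proof -
    have sum0: "(\<Sum>l\<in>J. (a l x0 \<bullet> gradient_comb x0 z) *\<^sub>R a l x0) + P *v z = 0"
      using z by (simp add: gram_system_def)
    have "gradient_comb x0 z \<bullet> gradient_comb x0 z
        = (\<Sum>l\<in>J. (a l x0 \<bullet> z) * (a l x0 \<bullet> gradient_comb x0 z))"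
      by (simp add: gradient_comb_def inner_sum_left)
    also have "\<dots> = 0"
      using sum_a_add_P_eq_0D(2)[OF sum0] by simp
    finally have "z \<bullet> gradient_comb x0 z = 0"
      by simp
    then have "(\<Sum>l\<in>J. (a l x0 \<bullet> z)\<^sup>2) = 0"
      by (simp add: gradient_comb_def inner_sum_right power2_eq_square inner_commute)
    then have "a l x0 \<bullet> z = 0" if "l \<in> J" for l
      using that finite_J by (simp add: sum_nonneg_eq_0_iff)
    then show "z = 0"
      using P_fixes sum_a_add_P_eq_0D(1)[OF sum0] by metis
  qed
  then show ?thesis
    using linear_gram_system by (simp add: linear_inj_iff_eq_0)
qed

lemma gram_system_tendsto: "((\<lambda>x. gram_system x z) \<longlongrightarrow> gram_system x0 z) (at x0)"
  unfolding gram_system_def gradient_comb_def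
  using isCont_a by (auto simp: isCont_def intro!: tendsto_intros)

lemma gram_rhs_tendsto: "(gram_rhs \<longlongrightarrow> gram_rhs x0) (at x0)"
  unfolding gram_rhs_def
  using isCont_a isCont_c isCont_df by (auto simp: isCont_def intro!: tendsto_intros)

lemma eventually_gram_system_solved:
  "\<forall>\<^sub>F x in nhds x0. gram_system x (multiplier_code x) = gram_rhs x"
proof -
  have "\<forall>\<^sub>F x in at x0. surj (gram_system x)"
    by (rule eventually_surj_perturbation[OF linear_gram_system inj_gram_system_x0
          linear_gram_system gram_system_tendsto])
  moreover have "surj (gram_system x0)"
    using linear_gram_system inj_gram_system_x0 by (simp add: linear_injective_imp_surjective)
  ultimately have "\<forall>\<^sub>F x in nhds x0. surj (gram_system x)"
    by (simp add: eventually_nhds_conv_at)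
  then show ?thesis
  proof (rule eventually_mono)
    fix x
    assume "surj (gram_system x)"
    then have "\<exists>z. gram_system x z = gram_rhs x"
      by (metis surjD)
    then show "gram_system x (multiplier_code x) = gram_rhs x"
      unfolding multiplier_code_def by (rule someI_ex)
  qed
qed

lemma multiplier_code_tendsto: "(multiplier_code \<longlongrightarrow> multiplier_code x0) (at x0)"
  using eventually_gram_system_solved
  by (intro tendsto_linear_solution[OF linear_gram_system inj_gram_system_x0 linear_gram_system
        gram_system_tendsto _ _ gram_rhs_tendsto]) (auto simp: eventually_nhds_conv_at)

lemma inner_a_direction:
  assumes "gram_system x (multiplier_code x) = gram_rhs x" "l \<in> J"
  shows "a l x \<bullet> direction x = - \<alpha> * c l x"
proof -
  let ?z = "multiplier_code x"
  have "(\<Sum>l\<in>J. (a l x \<bullet> gradient_comb x ?z - (\<alpha> * c l x - a l x \<bullet> df x)) *\<^sub>R a l x0) + P *v ?z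
      = gram_system x ?z - gram_rhs x"
    by (simp add: gram_system_def gram_rhs_def scaleR_diff_left sum_subtractf)
  then have "a l x \<bullet> gradient_comb x ?z = \<alpha> * c l x - a l x \<bullet> df x"
    using sum_a_add_P_eq_0D(2) assms by fastforce
  then show ?thesis
    by (simp add: direction_eq inner_diff_right)
qed

lemma eventually_inner_a_direction:
  "\<forall>\<^sub>F x in nhds x0. \<forall>l\<in>J. a l x \<bullet> direction x = - \<alpha> * c l x"
  using eventually_gram_system_solved by (rule eventually_mono) (use inner_a_direction in blast)

lemma direction_x0: "direction x0 = 0"
  and multiplier_x0: "l \<in> J \<Longrightarrow> multiplier l x0 = w0 l"
proof -
  have solved: "gram_system x0 (multiplier_code x0) = gram_rhs x0"
    using eventually_gram_system_solved by (simp add: eventually_nhds_conv_at)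
  have "df x0 = - (\<Sum>l\<in>J. w0 l *\<^sub>R a l x0)"
    using stationary by (simp add: eq_neg_iff_add_eq_0)
  then have dir: "direction x0 = (\<Sum>l\<in>J. (w0 l - multiplier l x0) *\<^sub>R a l x0)"
    by (simp add: direction_def scaleR_diff_left sum_subtractf)
  have "direction x0 \<bullet> direction x0 = (\<Sum>l\<in>J. (w0 l - multiplier l x0) *\<^sub>R a l x0) \<bullet> direction x0"
    by (simp only: dir[symmetric])
  also have "\<dots> = (\<Sum>l\<in>J. (w0 l - multiplier l x0) * (a l x0 \<bullet> direction x0))"
    by (simp add: inner_sum_left)
  also have "\<dots> = 0"
    using inner_a_direction[OF solved] c_x0 by simp
  finally show "direction x0 = 0"
    by simp
  with dir show "l \<in> J \<Longrightarrow> multiplier l x0 = w0 l"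
    using a_independent[of "\<lambda>l. w0 l - multiplier l x0"] by auto
qed

lemma isCont_multiplier: "isCont (multiplier l) x0"
  unfolding isCont_def multiplier_def by (intro tendsto_intros multiplier_code_tendsto)

lemma isCont_direction: "isCont direction x0"
  unfolding direction_def[abs_def]
  using isCont_a isCont_df isCont_multiplier by (auto intro!: continuous_intros)

lemma P_direction_has_derivative:
  "((\<lambda>x. P *v direction x) has_derivative
     (\<lambda>d. - (P *v (Hf *v d)) - (\<Sum>l\<in>J. w0 l *\<^sub>R (P *v (H l *v d))))) (at x0)"
proof -
  have "P *v direction x = - (P *v df x) - (\<Sum>l\<in>J. multiplier l x *\<^sub>R (P *v a l x))" for x
    by (simp add: direction_def matrix_vector_mult_diff_distrib
        linear_neg[OF matrix_vector_mul_linear] linear_sum[OF matrix_vector_mul_linear]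
        linear_scale[OF matrix_vector_mul_linear])
  moreover have "((\<lambda>x. multiplier l x *\<^sub>R (P *v a l x)) has_derivative
      (\<lambda>d. w0 l *\<^sub>R (P *v (H l *v d)))) (at x0)" if "l \<in> J" for l
  proof -
    have "(multiplier l \<longlongrightarrow> w0 l) (at x0)"
      using isCont_multiplier[of l] multiplier_x0[OF that] by (simp add: isCont_def)
    moreover have "((\<lambda>x. P *v a l x) has_derivative (\<lambda>d. P *v (H l *v d))) (at x0)"
      using a_has_derivative[OF that]
      by (rule bounded_linear.has_derivative[OF matrix_vector_mul_bounded_linear])
    ultimately show ?thesis
      using P_a_eq_0[OF that]
      by (rule bounded_bilinear.has_derivative_vanishing_right[OF bounded_bilinear_scaleR])
  qed
  ultimately show ?thesis
    by (simp only:) (intro has_derivative_diff has_derivative_minus has_derivative_sum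
        bounded_linear.has_derivative[OF matrix_vector_mul_bounded_linear df_has_derivative])
qed

lemma inner_a_direction_has_derivative:
  assumes "l \<in> J"
  shows "((\<lambda>x. a l x0 \<bullet> direction x) has_derivative (\<lambda>d. - \<alpha> * (a l x0 \<bullet> d))) (at x0)"
proof (rule has_derivative_transform_nhds)
  have "(direction \<longlongrightarrow> 0) (at x0)"
    using isCont_direction direction_x0 by (simp add: isCont_def)
  moreover have "((\<lambda>x. a l x - a l x0) has_derivative (\<lambda>d. H l *v d)) (at x0)"
    using has_derivative_diff[OF a_has_derivative[OF assms] has_derivative_const] by simp
  ultimately have "((\<lambda>x. direction x \<bullet> (a l x - a l x0)) has_derivative (\<lambda>d. 0 \<bullet> (H l *v d))) (at x0)"
    by (rule bounded_bilinear.has_derivative_vanishing_right[OF bounded_bilinear_inner]) simp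
  from has_derivative_diff[OF has_derivative_mult_right[OF c_has_derivative[OF assms], of "- \<alpha>"] this]
  show "((\<lambda>x. - \<alpha> * c l x - direction x \<bullet> (a l x - a l x0)) has_derivative
      (\<lambda>d. - \<alpha> * (a l x0 \<bullet> d))) (at x0)"
    by simp
  show "\<forall>\<^sub>F x in nhds x0. - \<alpha> * c l x - direction x \<bullet> (a l x - a l x0) = a l x0 \<bullet> direction x"
    using eventually_inner_a_direction
  proof (rule eventually_mono)
    fix x
    assume "\<forall>l\<in>J. a l x \<bullet> direction x = - \<alpha> * c l x"
    then have "direction x \<bullet> a l x = - \<alpha> * c l x"
      using assms by (simp add: inner_commute)
    then show "- \<alpha> * c l x - direction x \<bullet> (a l x - a l x0) = a l x0 \<bullet> direction x"
      by (simp add: inner_diff_right inner_diff_left inner_commute)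
  qed
qed

lemma direction_has_derivative:
  "(direction has_derivative
     (\<lambda>d. - (P *v (Hf *v d)) - (\<Sum>l\<in>J. w0 l *\<^sub>R (P *v (H l *v d))) - \<alpha> *\<^sub>R (d - P *v d))) (at x0)"
proof -
  txt \<open>
    The multipliers are only known to be continuous. The tangential part \<open>P *v direction x\<close>
    is nevertheless differentiable since P kills every \<open>a l x0\<close>; the normal part is read off
    from the constraints \<open>a l x0 \<bullet> direction x\<close>. The injective map T recombines the two.
  \<close>
  define T where "T z = gradient_comb x0 z + P *v z" for z
  have linear_T: "linear T"
    unfolding T_def[abs_def] by (intro linear_compose_add linear_gradient_comb matrix_vector_mul_linear)
  have "z = 0" if "T z = 0" for z
  proof -
    have sum0: "(\<Sum>l\<in>J. (a l x0 \<bullet> z) *\<^sub>R a l x0) + P *v z = 0"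
      using that by (simp add: T_def gradient_comb_def)
    then have "P *v z = z"
      using sum_a_add_P_eq_0D(2)[OF sum0] by (intro P_fixes) simp
    then show "z = 0"
      using sum_a_add_P_eq_0D(1)[OF sum0] by simp
  qed
  then have "inj T"
    using linear_T by (simp add: linear_inj_iff_eq_0)
  then obtain S where "linear S" "S \<circ> T = id"
    using linear_injective_left_inverse[OF linear_T] by blast
  then have S: "linear S" "\<And>z. S (T z) = z"
    by (auto simp: fun_eq_iff)
  have T_P: "T (P *v z) = P *v z" for z
    by (simp add: T_def gradient_comb_def inner_a_P_eq_0 P_idem)
  have T_proj: "T (d - P *v d) = gradient_comb x0 d" for d
  proof -
    have "gradient_comb x0 (P *v d) = 0"
      by (simp add: gradient_comb_def inner_a_P_eq_0)
    then show ?thesis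
      by (simp add: T_def linear_diff[OF linear_gradient_comb] matrix_vector_mult_diff_distrib P_idem)
  qed
  let ?D = "\<lambda>d. (\<Sum>l\<in>J. (- \<alpha> * (a l x0 \<bullet> d)) *\<^sub>R a l x0)
      + (- (P *v (Hf *v d)) - (\<Sum>l\<in>J. w0 l *\<^sub>R (P *v (H l *v d))))"
  have "((\<lambda>x. T (direction x)) has_derivative ?D) (at x0)"
    unfolding T_def gradient_comb_def
    by (intro has_derivative_add has_derivative_sum has_derivative_scaleR_left
        inner_a_direction_has_derivative P_direction_has_derivative)
  then have "((\<lambda>x. S (T (direction x))) has_derivative (\<lambda>d. S (?D d))) (at x0)"
    using S(1) unfolding linear_conv_bounded_linear by (rule bounded_linear.has_derivative[rotated])
  moreover have "?D d = T (- \<alpha> *\<^sub>R (d - P *v d)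
      + (- (P *v (Hf *v d)) - (\<Sum>l\<in>J. w0 l *\<^sub>R (P *v (H l *v d)))))" for d
  proof -
    have "?D d = - \<alpha> *\<^sub>R gradient_comb x0 d
        + (- (P *v (Hf *v d)) - (\<Sum>l\<in>J. w0 l *\<^sub>R (P *v (H l *v d))))"
      by (simp add: gradient_comb_def scaleR_sum_right)
    also have "\<dots> = - \<alpha> *\<^sub>R T (d - P *v d)
        + (- T (P *v (Hf *v d)) - (\<Sum>l\<in>J. w0 l *\<^sub>R T (P *v (H l *v d))))"
      by (simp only: T_proj T_P)
    also have "\<dots> = T (- \<alpha> *\<^sub>R (d - P *v d)
        + (- (P *v (Hf *v d)) - (\<Sum>l\<in>J. w0 l *\<^sub>R (P *v (H l *v d)))))"
      by (simp only: linear_add[OF linear_T] linear_scale[OF linear_T] linear_diff[OF linear_T]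
          linear_neg[OF linear_T] linear_sum[OF linear_T])
    finally show ?thesis .
  qed
  ultimately show ?thesis
    using S(2) by simp
qed

end

locale strict_kkt_point =
  fixes f :: "real^'n \<Rightarrow> real"
    and g h :: "nat \<Rightarrow> real^'n \<Rightarrow> real"
    and m k :: nat
    and \<alpha> :: real
    and xs :: "real^'n"
    and u v :: "nat \<Rightarrow> real"
    and P :: "real^'n^'n"
  assumes alpha_pos: "\<alpha> > 0"
    and f_C2: "twice_cont_diff f"
    and g_C2: "\<forall>i<m. twice_cont_diff (g i)"
    and h_C2: "\<forall>j<k. twice_cont_diff (h j)"
    and KKT: "KKT_triple f g m h k xs u v"
    and licq: "LICQ g m h k xs"
    and strict_compl: "\<forall>i\<in>active g m xs. u i > 0"
    and P_proj: "is_orth_proj_matrix P (crit_space g m h k xs)"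
begin

abbreviation binding :: "(nat + nat) set" where
  "binding \<equiv> Inl ` active g m xs \<union> Inr ` {..<k}"

lemma active_subset: "active g m xs \<subseteq> {..<m}"
  by (auto simp: active_def)

lemma finite_active: "finite (active g m xs)"
  using active_subset by (rule finite_subset) simp

lemma sum_binding:
  fixes F :: "nat + nat \<Rightarrow> 'a::comm_monoid_add"
  shows "(\<Sum>l\<in>binding. F l) = (\<Sum>i\<in>active g m xs. F (Inl i)) + (\<Sum>j<k. F (Inr j))"
  using finite_active by (subst sum.union_disjoint) (auto simp: sum.reindex)

lemma sum_multipliers_active:
  fixes F :: "nat \<Rightarrow> 'a::real_vector"
  shows "(\<Sum>i<m. u i *\<^sub>R F i) = (\<Sum>i\<in>active g m xs. u i *\<^sub>R F i)"
  using active_subset KKT_triple_inactive_multiplier[OF KKT] by (intro sum.mono_neutral_right) auto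

sublocale equality_direction binding "case_sum g h" "\<lambda>l. grad (case_sum g h l)"
  "\<lambda>l. hess (case_sum g h l) xs" "grad f" "hess f xs" xs "case_sum u v" P \<alpha>
proof
  show "finite binding"
    using finite_active by simp
next
  fix l
  assume "l \<in> binding"
  then have C2: "twice_cont_diff (case_sum g h l)" and zero: "case_sum g h l xs = 0"
    using g_C2 h_C2 KKT active_subset by (auto simp: active_def KKT_triple_def)
  show "(case_sum g h l has_derivative (\<lambda>d. grad (case_sum g h l) xs \<bullet> d)) (at xs)"
    and "(grad (case_sum g h l) has_derivative (\<lambda>d. hess (case_sum g h l) xs *v d)) (at xs)"
    using twice_cont_diff_has_derivative[OF C2] by blast+
  show "case_sum g h l xs = 0"
    by (rule zero)
next
  show "(grad f has_derivative (\<lambda>d. hess f xs *v d)) (at xs)"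
    by (rule twice_cont_diff_has_derivative(2)[OF f_C2])
next
  fix t l
  assume "(\<Sum>l\<in>binding. t l *\<^sub>R grad (case_sum g h l) xs) = 0" and l: "l \<in> binding"
  then have "(\<Sum>i\<in>active g m xs. (t \<circ> Inl) i *\<^sub>R grad (g i) xs)
      + (\<Sum>j<k. (t \<circ> Inr) j *\<^sub>R grad (h j) xs) = 0"
    unfolding sum_binding by simp
  with licq have "(\<forall>i\<in>active g m xs. (t \<circ> Inl) i = 0) \<and> (\<forall>j<k. (t \<circ> Inr) j = 0)"
    unfolding LICQ_def by blast
  then show "t l = 0"
    using l by auto
next
  show "grad f xs + (\<Sum>l\<in>binding. case_sum u v l *\<^sub>R grad (case_sum g h l) xs) = 0"
    using KKT unfolding KKT_triple_def sum_binding sum_multipliers_active by (simp add: add.assoc)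
next
  have "crit_space g m h k xs = {z. \<forall>l\<in>binding. grad (case_sum g h l) xs \<bullet> z = 0}"
    by (auto simp: crit_space_def ball_Un)
  then show "is_orth_proj_matrix P {z. \<forall>l\<in>binding. grad (case_sum g h l) xs \<bullet> z = 0}"
    using P_proj by simp
qed

lemma eventually_active_multipliers_pos:
  "\<forall>\<^sub>F x in nhds xs. \<forall>i\<in>active g m xs. multiplier (Inl i) x > 0"
proof (rule eventually_ball_finite[OF finite_active], rule ballI)
  fix i
  assume i: "i \<in> active g m xs"
  then have "multiplier (Inl i) xs > 0"
    using multiplier_x0[of "Inl i"] strict_compl by simp
  moreover have "(multiplier (Inl i) \<longlongrightarrow> multiplier (Inl i) xs) (nhds xs)"
    using isCont_multiplier unfolding isCont_def by (simp only: tendsto_at_iff_tendsto_nhds)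
  ultimately show "\<forall>\<^sub>F x in nhds xs. multiplier (Inl i) x > 0"
    by (simp add: order_tendstoD(1))
qed

lemma eventually_inactive_slack:
  "\<forall>\<^sub>F x in nhds xs. \<forall>i\<in>{..<m} - active g m xs. grad (g i) x \<bullet> direction x + \<alpha> * g i x < 0"
proof (rule eventually_ball_finite, simp, rule ballI)
  fix i
  assume i: "i \<in> {..<m} - active g m xs"
  then have "twice_cont_diff (g i)" and "g i xs < 0"
    using g_C2 KKT by (auto simp: active_def KKT_triple_def less_le)
  then have cont: "isCont (\<lambda>x. grad (g i) x \<bullet> direction x + \<alpha> * g i x) xs"
    and neg: "grad (g i) xs \<bullet> direction xs + \<alpha> * g i xs < 0"
    using twice_cont_diff_has_derivative[of "g i"] isCont_direction direction_x0 alpha_pos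
    by (auto intro!: continuous_intros dest: has_derivative_continuous simp: mult_pos_neg)
  from cont have "((\<lambda>x. grad (g i) x \<bullet> direction x + \<alpha> * g i x)
      \<longlongrightarrow> grad (g i) xs \<bullet> direction xs + \<alpha> * g i xs) (nhds xs)"
    unfolding isCont_def by (rule tendsto_at_iff_tendsto_nhds[THEN iffD1])
  then show "\<forall>\<^sub>F x in nhds xs. grad (g i) x \<bullet> direction x + \<alpha> * g i x < 0"
    using neg by (rule order_tendstoD(2))
qed

lemma eventually_direction_eq_G_alpha: "\<forall>\<^sub>F x in nhds xs. direction x = G_alpha \<alpha> f g m h k x"
  using eventually_inner_a_direction eventually_active_multipliers_pos eventually_inactive_slack
proof eventually_elim
  case (elim x)
  then have active: "grad (g i) x \<bullet> direction x = - \<alpha> * g i x" if "i \<in> active g m xs" for i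
    using that by force
  have "grad (g i) x \<bullet> direction x \<le> - \<alpha> * g i x" if "i < m" for i
  proof (cases "i \<in> active g m xs")
    case False
    then show ?thesis
      using elim(3) that by force
  qed (simp add: active)
  moreover have "grad (h j) x \<bullet> direction x = - \<alpha> * h j x" if "j < k" for j
    using elim(1) that by force
  ultimately have feasible: "direction x \<in> dir_feasible \<alpha> g m h k x"
    by (simp add: dir_feasible_def)
  have "direction x + grad f x + (\<Sum>i\<in>active g m xs. multiplier (Inl i) x *\<^sub>R grad (g i) x)
      + (\<Sum>j<k. multiplier (Inr j) x *\<^sub>R grad (h j) x) = 0"
    unfolding direction_def sum_binding by simp
  then show ?case
    using active elim(2) active_subset
    by (intro G_alpha_eqI[OF feasible, symmetric]) (auto simp: less_imp_le)
qed

lemma lagrangian_projection_apply: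
  "(- (P ** (hess f xs + (\<Sum>i<m. u i *\<^sub>R hess (g i) xs) + (\<Sum>j<k. v j *\<^sub>R hess (h j) xs)))
      - \<alpha> *\<^sub>R (mat 1 - P)) *v d
    = - (P *v (hess f xs *v d))
      - (\<Sum>l\<in>binding. case_sum u v l *\<^sub>R (P *v (hess (case_sum g h l) xs *v d)))
      - \<alpha> *\<^sub>R (d - P *v d)"
proof -
  have "(\<Sum>l\<in>binding. case_sum u v l *\<^sub>R (P *v (hess (case_sum g h l) xs *v d)))
      = (\<Sum>i<m. u i *\<^sub>R (P *v (hess (g i) xs *v d))) + (\<Sum>j<k. v j *\<^sub>R (P *v (hess (h j) xs *v d)))"
    by (simp add: sum_binding sum_multipliers_active)
  also have "\<dots> = P *v ((\<Sum>i<m. u i *\<^sub>R hess (g i) xs) *v d + (\<Sum>j<k. v j *\<^sub>R hess (h j) xs) *v d)"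
    by (simp add: matrix_vector_mult_sum_left matrix_vector_right_distrib
        linear_sum[OF matrix_vector_mul_linear] linear_scale[OF matrix_vector_mul_linear]
        flip: scaleR_matrix_vector_assoc)
  finally show ?thesis
    by (simp add: matrix_vector_mult_diff_rdistrib matrix_vector_mult_add_rdistrib
        matrix_vector_mult_uminus_left matrix_vector_right_distrib matrix_vector_mult_diff_distrib
        flip: scaleR_matrix_vector_assoc matrix_vector_mul_assoc)
qed

end

theorem mainTheorem13:
  fixes f :: "real^'n \<Rightarrow> real"
    and g h :: "nat \<Rightarrow> real^'n \<Rightarrow> real"
    and m k :: nat
    and \<alpha> :: real
    and xs :: "real^'n"
    and u v :: "nat \<Rightarrow> real"
    and P :: "real^'n^'n"
  assumes alpha_pos: "\<alpha> > 0"
    and f_C2: "twice_cont_diff f"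
    and g_C2: "\<forall>i<m. twice_cont_diff (g i)"
    and h_C2: "\<forall>j<k. twice_cont_diff (h j)"
    and KKT: "KKT_triple f g m h k xs u v"
    and licq: "LICQ g m h k xs"
    and strict_compl: "\<forall>i\<in>active g m xs. u i > 0"
    and SOSC: "\<forall>z\<in>crit_space g m h k xs. z \<noteq> 0 \<longrightarrow>
                 z \<bullet> ((hess f xs + (\<Sum>i<m. u i *\<^sub>R hess (g i) xs)
                           + (\<Sum>j<k. v j *\<^sub>R hess (h j) xs)) *v z) > 0"
    and P_def: "is_orth_proj_matrix P (crit_space g m h k xs)"
  shows "(G_alpha \<alpha> f g m h k has_derivative
            (\<lambda>d. (- (P ** (hess f xs + (\<Sum>i<m. u i *\<^sub>R hess (g i) xs)
                              + (\<Sum>j<k. v j *\<^sub>R hess (h j) xs)))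
                   - \<alpha> *\<^sub>R (mat 1 - P)) *v d)) (at xs)"
proof -
  interpret strict_kkt_point f g h m k \<alpha> xs u v P
    using alpha_pos f_C2 g_C2 h_C2 KKT licq strict_compl P_def by unfold_locales
  show ?thesis
    using direction_has_derivative eventually_direction_eq_G_alpha
    unfolding lagrangian_projection_apply by (rule has_derivative_transform_nhds)
qed

end
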